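(* Let $T$ be a $k$-tree and $C$ a $k$-clique of $T$. Then $$k+\frac{\log_2 N(T;C)}{2}\le \mu(T;C)\le \frac{N(T;C)+2k-1}{2}.$$ The lower bound holds with equality if and only if $T$ is a $k$-star and $C$ is its base $k$-clique. If $T$ has at least $k+1$ vertices, the upper bound holds with equality if and only if $T$ is a path-type $k$-tree and $C$ is simplicial.
   Context: A $k$-tree is defined recursively: $K_k$ is a $k$-tree, and if $T$ is a $k$-tree then so is the graph obtained by joining a new vertex to all vertices of some $k$-clique of $T$; there are no others. A sub-$k$-tree is a subgraph that is itself a $k$-tree. $N(T;C)$ is the number of sub-$k$-trees containing $C$ and $\mu(T;C)$ is their average number of vertices. A $k$-star is a $k$-tree consisting of a $k$-clique (its base $k$-clique) together with some number $m\ge 0$ of further pairwise non-adjacent vertices each joined to all vertices of the base (for $m=1$, any $k$-clique of $K_{k+1}$ may serve as base). A $k$-leaf is a vertex lying in exactly one $(k+1)$-clique; a simplicial $k$-clique is one containing a $k$-leaf. A path-type $k$-tree is a $k$-tree that is $K_k$, $K_{k+1}$, or has exactly two $k$-leaves. *)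

theory Defs
  imports Complex_Main
begin

text \<open>Simple graphs are given by a vertex set V and an edge set E of 2-element vertex sets.\<close>

definition isClique :: "'a set set \<Rightarrow> 'a set \<Rightarrow> bool" where
  "isClique E S \<longleftrightarrow> (\<forall>x\<in>S. \<forall>y\<in>S. x \<noteq> y \<longrightarrow> {x, y} \<in> E)"

definition completeEdges :: "'a set \<Rightarrow> 'a set set" where
  "completeEdges V = {e. \<exists>x y. x \<in> V \<and> y \<in> V \<and> x \<noteq> y \<and> e = {x, y}}"

inductive kTree :: "nat \<Rightarrow> 'a set \<Rightarrow> 'a set set \<Rightarrow> bool" for k :: nat where
  base: "finite V \<Longrightarrow> card V = k \<Longrightarrow> kTree k V (completeEdges V)"
| step: "kTree k V E \<Longrightarrow> C \<subseteq> V \<Longrightarrow> card C = k \<Longrightarrow> isClique E C \<Longrightarrow> v \<notin> V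
          \<Longrightarrow> kTree k (insert v V) (E \<union> {{v, c} | c. c \<in> C})"

definition kClique :: "nat \<Rightarrow> 'a set \<Rightarrow> 'a set set \<Rightarrow> 'a set \<Rightarrow> bool" where
  "kClique k V E C \<longleftrightarrow> C \<subseteq> V \<and> finite C \<and> card C = k \<and> isClique E C"

definition subKTrees :: "nat \<Rightarrow> 'a set \<Rightarrow> 'a set set \<Rightarrow> 'a set \<Rightarrow> ('a set \<times> 'a set set) set" where
  "subKTrees k V E C = {(V', E'). V' \<subseteq> V \<and> E' \<subseteq> E \<and> kTree k V' E' \<and> C \<subseteq> V'}"

definition Ncount :: "nat \<Rightarrow> 'a set \<Rightarrow> 'a set set \<Rightarrow> 'a set \<Rightarrow> nat" where
  "Ncount k V E C = card (subKTrees k V E C)"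

definition mu :: "nat \<Rightarrow> 'a set \<Rightarrow> 'a set set \<Rightarrow> 'a set \<Rightarrow> real" where
  "mu k V E C = (\<Sum>S\<in>subKTrees k V E C. real (card (fst S))) / real (Ncount k V E C)"

definition kStarBase :: "nat \<Rightarrow> 'a set \<Rightarrow> 'a set set \<Rightarrow> 'a set \<Rightarrow> bool" where
  "kStarBase k V E B \<longleftrightarrow> kTree k V E \<and> kClique k V E B
     \<and> (\<forall>x\<in>V - B. \<forall>y\<in>B. {x, y} \<in> E)
     \<and> (\<forall>x\<in>V - B. \<forall>y\<in>V - B. x \<noteq> y \<longrightarrow> {x, y} \<notin> E)"

definition kLeaf :: "nat \<Rightarrow> 'a set \<Rightarrow> 'a set set \<Rightarrow> 'a \<Rightarrow> bool" where
  "kLeaf k V E v \<longleftrightarrow> v \<in> V \<and> card {S. kClique (k + 1) V E S \<and> v \<in> S} = 1"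

definition simplicial :: "nat \<Rightarrow> 'a set \<Rightarrow> 'a set set \<Rightarrow> 'a set \<Rightarrow> bool" where
  "simplicial k V E C \<longleftrightarrow> kClique k V E C \<and> (\<exists>v\<in>C. kLeaf k V E v)"

definition pathType :: "nat \<Rightarrow> 'a set \<Rightarrow> 'a set set \<Rightarrow> bool" where
  "pathType k V E \<longleftrightarrow> kTree k V E \<and>
     (card V = k \<or> card V = k + 1 \<or> card {v. kLeaf k V E v} = 2)"

end

theory Submission
  imports Defs
begin
section \<open>Excess of set families and set lattices\<close>

definition excess :: "'a set \<Rightarrow> 'a set set \<Rightarrow> real" where
  "excess B F = (\<Sum>A\<in>F. real (card (A - B)))"

definition set_lattice :: "'a set \<Rightarrow> 'a set set \<Rightarrow> bool" where
  "set_lattice B F \<longleftrightarrow> finite F \<and> B \<in> F \<and> (\<forall>A\<in>F. finite A \<and> B \<subseteq> A)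
     \<and> (\<forall>X\<in>F. \<forall>Y\<in>F. X \<union> Y \<in> F \<and> X \<inter> Y \<in> F)"

lemma set_lattice_extend:
  assumes F: "set_lattice B F" and v: "\<forall>A\<in>F. v \<notin> A"
  shows "set_lattice B (F \<union> insert v ` {A \<in> F. D \<subseteq> A})"
proof -
  let ?G = "F \<union> insert v ` {A \<in> F. D \<subseteq> A}"
  have G: "X \<in> ?G \<longleftrightarrow> X - {v} \<in> F \<and> (v \<in> X \<longrightarrow> D \<subseteq> X - {v})" for X
  proof
    assume "X \<in> ?G"
    then show "X - {v} \<in> F \<and> (v \<in> X \<longrightarrow> D \<subseteq> X - {v})"
      using v by (auto simp: insert_Diff_if)
  next
    assume X: "X - {v} \<in> F \<and> (v \<in> X \<longrightarrow> D \<subseteq> X - {v})"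
    show "X \<in> ?G"
    proof (cases "v \<in> X")
      case True
      then have "X = insert v (X - {v})" by auto
      moreover have "X - {v} \<in> {A \<in> F. D \<subseteq> A}" using X True by simp
      ultimately have "X \<in> insert v ` {A \<in> F. D \<subseteq> A}" by (rule image_eqI)
      then show ?thesis by (rule UnI2)
    qed (use X in auto)
  qed
  have "X \<union> Y \<in> ?G \<and> X \<inter> Y \<in> ?G" if "X \<in> ?G" "Y \<in> ?G" for X Y
  proof -
    have "(X - {v}) \<union> (Y - {v}) \<in> F" "(X - {v}) \<inter> (Y - {v}) \<in> F"
      using F that unfolding G set_lattice_def by auto
    moreover have "(X \<union> Y) - {v} = (X - {v}) \<union> (Y - {v})" "(X \<inter> Y) - {v} = (X - {v}) \<inter> (Y - {v})"
      by auto
    ultimately show ?thesis using that unfolding G by auto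
  qed
  then show ?thesis using F v unfolding set_lattice_def by auto
qed

definition boolean_family :: "'a set \<Rightarrow> 'a set set \<Rightarrow> bool" where
  "boolean_family B F \<longleftrightarrow> (\<exists>U. U \<inter> B = {} \<and> F = (\<lambda>X. B \<union> X) ` Pow U)"

lemma sum_card_Pow: "finite U \<Longrightarrow> 2 * (\<Sum>X\<in>Pow U. card X) = card U * 2 ^ card U"
proof (induction rule: finite_induct)
  case (insert x U)
  have disj: "Pow U \<inter> insert x ` Pow U = {}" using insert(2) by auto
  have inj: "inj_on (insert x) (Pow U)"
  proof (rule inj_onI)
    fix X Y assume XY: "X \<in> Pow U" "Y \<in> Pow U" and eq: "insert x X = insert x Y"
    have "insert x X - {x} = X" "insert x Y - {x} = Y" using XY insert(2) by auto
    then show "X = Y" using eq by metis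
  qed
  have "(\<Sum>X\<in>Pow (insert x U). card X) = (\<Sum>X\<in>Pow U. card X) + (\<Sum>X\<in>insert x ` Pow U. card X)"
    unfolding Pow_insert using insert(1) disj by (simp add: sum.union_disjoint)
  also have "(\<Sum>X\<in>insert x ` Pow U. card X) = (\<Sum>X\<in>Pow U. card X + 1)"
  proof -
    have "card (insert x X) = card X + 1" if "X \<in> Pow U" for X
    proof -
      have "finite X" "x \<notin> X" using that insert(1,2) finite_subset[of X U] by auto
      then show ?thesis by simp
    qed
    then show ?thesis by (simp add: sum.reindex[OF inj])
  qed
  also have "\<dots> = (\<Sum>X\<in>Pow U. card X) + (\<Sum>X\<in>Pow U. 1)" by (rule sum.distrib)
  also have "(\<Sum>X\<in>Pow U. 1) = (2::nat) ^ card U" using card_Pow[OF insert(1)] by simp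
  finally show ?case using insert by (simp add: algebra_simps)
qed simp

lemma excess_boolean_family:
  assumes "finite F" "boolean_family B F"
  shows "real (card F) * log 2 (card F) = 2 * excess B F"
proof -
  obtain U where U: "U \<inter> B = {}" "F = (\<lambda>X. B \<union> X) ` Pow U"
    using assms(2) unfolding boolean_family_def by blast
  have inj: "inj_on (\<lambda>X. B \<union> X) (Pow U)" using U(1) unfolding inj_on_def by blast
  then have fU: "finite U" using assms(1) U(2) finite_image_iff by fastforce
  have "excess B F = (\<Sum>X\<in>Pow U. real (card ((B \<union> X) - B)))"
    unfolding excess_def U(2) by (simp add: sum.reindex[OF inj])
  also have "\<dots> = (\<Sum>X\<in>Pow U. real (card X))"
  proof (rule sum.cong[OF refl])
    fix X assume "X \<in> Pow U"
    then have "(B \<union> X) - B = X" using U(1) by blast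
    then show "real (card ((B \<union> X) - B)) = real (card X)" by simp
  qed
  finally have "2 * excess B F = real (2 * (\<Sum>X\<in>Pow U. card X))" by simp
  also have "\<dots> = real (card U) * 2 ^ card U" unfolding sum_card_Pow[OF fU] by simp
  finally show ?thesis
    using U(2) card_image[OF inj] card_Pow[OF fU] by (simp add: log_nat_power)
qed

lemma boolean_family_shift:
  assumes F: "boolean_family B F" and m: "m \<notin> B" "\<forall>A\<in>F. m \<notin> A"
  shows "boolean_family B (F \<union> (\<lambda>A. A \<union> insert m B) ` F)"
proof -
  obtain U where U: "U \<inter> B = {}" "F = (\<lambda>X. B \<union> X) ` Pow U"
    using F unfolding boolean_family_def by blast
  have "B \<union> U \<in> F" unfolding U(2) by (intro imageI) simp
  then have disj: "insert m U \<inter> B = {}" using U(1) m by blast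
  have "(\<lambda>X. B \<union> X) ` insert m ` Pow U = (\<lambda>A. A \<union> insert m B) ` F"
    unfolding U(2) image_image by (rule image_cong[OF refl]) auto
  then have "F \<union> (\<lambda>A. A \<union> insert m B) ` F = (\<lambda>X. B \<union> X) ` Pow (insert m U)"
    unfolding Pow_insert image_Un U(2)[symmetric] by (simp only:)
  with disj show ?thesis unfolding boolean_family_def by (intro exI[of _ "insert m U"]) (rule conjI)
qed

lemma inj_on_Un_meet: "(\<And>A. A \<in> F \<Longrightarrow> B \<subseteq> A \<and> A \<inter> M = B) \<Longrightarrow> inj_on (\<lambda>A. A \<union> M) F"
proof (rule inj_onI)
  fix X Y assume "\<And>A. A \<in> F \<Longrightarrow> B \<subseteq> A \<and> A \<inter> M = B" "X \<in> F" "Y \<in> F" "X \<union> M = Y \<union> M"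
  then have "X = (X \<union> M) - (M - B)" "Y = (Y \<union> M) - (M - B)" "X \<union> M = Y \<union> M" by blast+
  then show "X = Y" by simp
qed

text \<open>Splitting a set lattice at an atom \<open>M\<close> and a point \<open>m \<in> M - B\<close>: the members avoiding \<open>m\<close>
  meet \<open>M\<close> in \<open>B\<close>, those containing \<open>m\<close> contain all of \<open>M\<close>.\<close>
lemma set_lattice_split:
  assumes F: "set_lattice B F" "F \<noteq> {B}"
  obtains M m F0 F1 where "F = F0 \<union> F1" "F0 \<inter> F1 = {}" "card F0 < card F" "card F1 < card F"
    "set_lattice B F0" "set_lattice M F1" "m \<in> M - B" "\<forall>A\<in>F0. m \<notin> A"
    "inj_on (\<lambda>A. A \<union> M) F0" "(\<lambda>A. A \<union> M) ` F0 \<subseteq> F1"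
proof -
  have fF: "finite F" "B \<in> F" and sub: "\<And>A. A \<in> F \<Longrightarrow> finite A \<and> B \<subseteq> A"
    and cl: "\<And>X Y. X \<in> F \<Longrightarrow> Y \<in> F \<Longrightarrow> X \<union> Y \<in> F \<and> X \<inter> Y \<in> F"
    using F(1) unfolding set_lattice_def by auto
  have "F - {B} \<noteq> {}" using F(2) fF(2) by blast
  then obtain M where "is_arg_min card (\<lambda>X. X \<in> F - {B}) M"
    using ex_is_arg_min_if_finite[of "F - {B}" card] fF(1) by blast
  then have M: "M \<in> F" "M \<noteq> B" and Mmin: "\<And>X. X \<in> F - {B} \<Longrightarrow> card M \<le> card X"
    unfolding is_arg_min_def by (auto simp: not_less)
  have fM: "finite M" "B \<subseteq> M" using sub[OF M(1)] by auto
  then obtain m where m: "m \<in> M" "m \<notin> B" using M(2) by blast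
  have atom: "M \<subseteq> A \<or> A \<inter> M = B" if "A \<in> F" for A
  proof (rule disjCI)
    assume "A \<inter> M \<noteq> B"
    then have "card M \<le> card (A \<inter> M)" using Mmin cl[OF that M(1)] by blast
    then have "A \<inter> M = M" using card_seteq[OF fM(1)] by blast
    then show "M \<subseteq> A" by blast
  qed
  define F0 F1 where "F0 = {A \<in> F. m \<notin> A}" and "F1 = {A \<in> F. m \<in> A}"
  have "F = F0 \<union> F1" "F0 \<inter> F1 = {}" "\<forall>A\<in>F0. m \<notin> A" unfolding F0_def F1_def by auto
  moreover have "card F0 < card F" "card F1 < card F"
    using fF M m unfolding F0_def F1_def by (auto intro!: psubset_card_mono)
  moreover have "set_lattice B F0"
    using fF sub cl m(2) unfolding set_lattice_def F0_def by auto
  moreover have "M \<subseteq> A" if "A \<in> F1" for A using atom that m unfolding F1_def by blast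
  then have "set_lattice M F1"
    using fF sub cl m(1) M(1) fM unfolding set_lattice_def F1_def by (auto intro: finite_subset)
  moreover have "B \<subseteq> A \<and> A \<inter> M = B" if "A \<in> F0" for A using that atom sub m unfolding F0_def by blast
  then have "inj_on (\<lambda>A. A \<union> M) F0" by (rule inj_on_Un_meet)
  moreover have "(\<lambda>A. A \<union> M) ` F0 \<subseteq> F1" using cl M(1) m(1) unfolding F0_def F1_def by auto
  ultimately show ?thesis using that m by blast
qed

lemma excess_split:
  assumes "finite F" "B \<subseteq> M" "finite M" "\<And>A. A \<in> F \<Longrightarrow> P A \<Longrightarrow> finite A \<and> M \<subseteq> A"
  shows "excess B F = excess B {A \<in> F. \<not> P A} + excess M {A \<in> F. P A}
    + real (card {A \<in> F. P A}) * real (card (M - B))"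
proof -
  have "card (A - B) = card (A - M) + card (M - B)" if "A \<in> F" "P A" for A
  proof -
    have "A - B = (A - M) \<union> (M - B)" "(A - M) \<inter> (M - B) = {}" using assms(2) assms(4)[OF that] by auto
    then show ?thesis using assms(3) assms(4)[OF that] by (simp add: card_Un_disjoint)
  qed
  then have "excess B {A \<in> F. P A}
      = excess M {A \<in> F. P A} + real (card {A \<in> F. P A}) * real (card (M - B))"
    unfolding excess_def by (simp add: sum.distrib)
  moreover have "excess B F = excess B (F \<inter> {A. P A}) + excess B (F - {A. P A})"
    unfolding excess_def using assms(1) by (rule sum.Int_Diff)
  moreover have "F \<inter> {A. P A} = {A \<in> F. P A}" "F - {A. P A} = {A \<in> F. \<not> P A}" by auto
  ultimately show ?thesis by simp
qed

lemma mult_log_add_le: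
  fixes a b :: real assumes a: "a > 0" and b: "b > 0"
  shows "(a + b) * log 2 (a + b) \<le> a * log 2 a + b * log 2 b + (a + b)"
proof -
  have "ln ((a + b) / (2 * a)) \<le> (a + b) / (2 * a) - 1" "ln ((a + b) / (2 * b)) \<le> (a + b) / (2 * b) - 1"
    using a b by (intro ln_le_minus_one; simp)+
  moreover have "ln ((a + b) / (2 * a)) = ln (a + b) - ln 2 - ln a"
    and "ln ((a + b) / (2 * b)) = ln (a + b) - ln 2 - ln b"
    using a b by (simp_all add: ln_div ln_mult)
  ultimately have "a * (ln (a + b) - ln 2 - ln a) \<le> a * ((a + b) / (2 * a) - 1)"
    and "b * (ln (a + b) - ln 2 - ln b) \<le> b * ((a + b) / (2 * b) - 1)"
    using a b by (simp_all add: mult_left_mono)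
  moreover have "a * ((a + b) / (2 * a) - 1) + b * ((a + b) / (2 * b) - 1) = 0"
    using a b by (simp add: field_simps)
  ultimately have "(a + b) * ln (a + b) \<le> a * ln a + b * ln b + (a + b) * ln 2"
    by (simp add: algebra_simps)
  then have "(a + b) * ln (a + b) / ln 2 \<le> (a * ln a + b * ln b + (a + b) * ln 2) / ln 2"
    by (simp add: divide_right_mono)
  then show ?thesis unfolding log_def by (simp add: field_simps)
qed

lemma entropy_recursion_bound:
  fixes a b d s0 s1 :: real
  assumes ab: "1 \<le> a" "a \<le> b" and d: "1 \<le> d" and s: "a * log 2 a \<le> 2 * s0" "b * log 2 b \<le> 2 * s1"
  shows "(a + b) * log 2 (a + b) \<le> 2 * s0 + 2 * s1 + 2 * (b * d)"
    and "(a + b) * log 2 (a + b) = 2 * s0 + 2 * s1 + 2 * (b * d) \<Longrightarrow> a * log 2 a = 2 * s0 \<and> a = b \<and> d = 1"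
proof -
  have K: "(a + b) * log 2 (a + b) \<le> a * log 2 a + b * log 2 b + (a + b)"
    using mult_log_add_le ab by simp
  have bd: "b \<le> b * d" using ab d by simp
  show "(a + b) * log 2 (a + b) \<le> 2 * s0 + 2 * s1 + 2 * (b * d)" using K s ab bd by linarith
  assume eq: "(a + b) * log 2 (a + b) = 2 * s0 + 2 * s1 + 2 * (b * d)"
  have "a * log 2 a = 2 * s0" using eq K s ab bd by linarith
  moreover have "a + b = 2 * (b * d)" using eq K s ab bd by linarith
  then have "b * d \<le> b * 1" using ab by linarith
  then have "d = 1" using ab d by simp
  ultimately show "a * log 2 a = 2 * s0 \<and> a = b \<and> d = 1" using \<open>a + b = 2 * (b * d)\<close> by simp
qed

text \<open>Induction on \<open>|F|\<close> via \<open>set_lattice_split\<close>: with \<open>a = |F0| \<le> b = |F1|\<close> the recursion is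
  \<open>(a + b) log (a + b) \<le> a log a + b log b + 2 b\<close>, and \<open>2 b\<close> is paid for by the \<open>b\<close> members of \<open>F1\<close>,
  each of which contains the \<open>|M - B| \<ge> 1\<close> extra points of \<open>M\<close>.\<close>
lemma set_lattice_excess_ge:
  assumes "set_lattice B F"
  shows "card F * log 2 (card F) \<le> 2 * excess B F
    \<and> (card F * log 2 (card F) = 2 * excess B F \<longrightarrow> boolean_family B F)"
  using assms
proof (induction "card F" arbitrary: F B rule: less_induct)
  case less
  show ?case
  proof (cases "F = {B}")
    case True
    have "boolean_family B F" unfolding True boolean_family_def by (intro exI[of _ "{}"]) simp
    then show ?thesis using True by (simp add: excess_def)
  next
    case False
    obtain M m F0 F1 where F: "F = F0 \<union> F1" "F0 \<inter> F1 = {}" and lt: "card F0 < card F" "card F1 < card F"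
      and L: "set_lattice B F0" "set_lattice M F1" and m: "m \<in> M - B" "\<forall>A\<in>F0. m \<notin> A"
      and inj: "inj_on (\<lambda>A. A \<union> M) F0" and img: "(\<lambda>A. A \<union> M) ` F0 \<subseteq> F1"
      by (rule set_lattice_split[OF less.prems False])
    have IH0: "card F0 * log 2 (card F0) \<le> 2 * excess B F0
        \<and> (card F0 * log 2 (card F0) = 2 * excess B F0 \<longrightarrow> boolean_family B F0)"
      using less.hyps[OF lt(1) L(1)] .
    have IH1: "card F1 * log 2 (card F1) \<le> 2 * excess M F1" using less.hyps[OF lt(2) L(2)] by blast
    have fin: "finite F" "finite M" "B \<subseteq> M" "finite F1"
      using less.prems L(2) F(1) unfolding set_lattice_def by auto
    have "1 \<le> real (card F0)" "real (card F0) \<le> real (card F1)" "1 \<le> real (card (M - B))"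
      using L(1) m(1) fin card_inj_on_le[OF inj img] unfolding set_lattice_def
      by (auto simp: Suc_le_eq card_gt_0_iff)
    note bound = entropy_recursion_bound[OF this conjunct1[OF IH0] IH1]
    have cF: "real (card F) = real (card F0) + real (card F1)" using fin F by (simp add: card_Un_disjoint)
    have parts: "{A \<in> F. m \<notin> A} = F0" "{A \<in> F. m \<in> A} = F1"
      using F(1) m L(2) unfolding set_lattice_def by auto
    then have "finite A \<and> M \<subseteq> A" if "A \<in> F" "m \<in> A" for A
      using that L(2) unfolding set_lattice_def by blast
    then have "excess B F = excess B F0 + excess M F1 + real (card F1) * real (card (M - B))"
      using excess_split[OF fin(1,3,2), of "\<lambda>A. m \<in> A"] unfolding parts by blast
    then have eF: "2 * excess B F
        = 2 * excess B F0 + 2 * excess M F1 + 2 * (real (card F1) * real (card (M - B)))" by simp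
    show ?thesis
    proof (intro conjI impI)
      show "card F * log 2 (card F) \<le> 2 * excess B F" unfolding cF eF by (rule bound(1))
    next
      assume "card F * log 2 (card F) = 2 * excess B F"
      then have "card F0 * log 2 (card F0) = 2 * excess B F0
          \<and> real (card F0) = real (card F1) \<and> real (card (M - B)) = 1"
        unfolding cF eF by (rule bound(2))
      then have B0: "boolean_family B F0" and "card F0 = card F1" "card (M - B) = 1"
        using IH0 by auto
      then obtain x where "M - B = {x}" by (auto simp: card_1_singleton_iff)
      then have "M = insert m B" using m(1) fin(3) by auto
      moreover have "(\<lambda>A. A \<union> M) ` F0 = F1"
        using card_seteq[OF fin(4) img] card_image[OF inj] \<open>card F0 = card F1\<close> by simp
      ultimately show "boolean_family B F" using boolean_family_shift[OF B0 _ m(2)] F(1) m(1) by simp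
    qed
  qed
qed

section \<open>k-trees\<close>

abbreviation join_edges :: "'a \<Rightarrow> 'a set \<Rightarrow> 'a set set" where
  "join_edges v D \<equiv> {{v, c} | c. c \<in> D}"

definition neighbours :: "'a set set \<Rightarrow> 'a \<Rightarrow> 'a set" where
  "neighbours E x = {y. {x, y} \<in> E}"

lemma completeEdges_pair_iff [simp]: "{x, y} \<in> completeEdges V \<longleftrightarrow> x \<in> V \<and> y \<in> V \<and> x \<noteq> y"
  unfolding completeEdges_def by (auto simp: doubleton_eq_iff)

lemma completeEdges_mono: "A \<subseteq> B \<Longrightarrow> completeEdges A \<subseteq> completeEdges B"
  unfolding completeEdges_def by blast

lemma notin_completeEdges: "v \<notin> A \<Longrightarrow> e \<in> completeEdges A \<Longrightarrow> v \<notin> e"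
  unfolding completeEdges_def by auto

lemma induced_join_edges_fresh: "v \<notin> A \<Longrightarrow> (E \<union> join_edges v D) \<inter> completeEdges A = E \<inter> completeEdges A"
  by (auto simp: completeEdges_def doubleton_eq_iff)

lemma completeEdges_insert: "x \<notin> A \<Longrightarrow> completeEdges (insert x A) = completeEdges A \<union> join_edges x A"
  unfolding completeEdges_def by auto

lemma completeEdges_remove: "{e \<in> completeEdges A. w \<notin> e} = completeEdges (A - {w})"
  unfolding completeEdges_def by auto

lemma neighbours_completeEdges: "x \<in> A \<Longrightarrow> neighbours (completeEdges A) x = A - {x}"
  unfolding neighbours_def by auto

lemma finite_completeEdges: "finite V \<Longrightarrow> finite (completeEdges V)"
  by (rule finite_subset[of _ "Pow V"]) (auto simp: completeEdges_def)

lemma card_completeEdges: "finite V \<Longrightarrow> card (completeEdges V) = card V choose 2"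
proof -
  assume "finite V"
  moreover have "completeEdges V = {B. B \<subseteq> V \<and> card B = 2}"
    unfolding completeEdges_def by (auto simp: card_2_iff)
  ultimately show ?thesis by (simp add: n_subsets)
qed

lemma card_join_edges: "v \<notin> D \<Longrightarrow> card (join_edges v D) = card D"
proof -
  assume "v \<notin> D"
  then have "inj_on (\<lambda>c. {v, c}) D" by (auto simp: inj_on_def doubleton_eq_iff)
  moreover have "join_edges v D = (\<lambda>c. {v, c}) ` D" by auto
  ultimately show ?thesis by (simp add: card_image)
qed

lemma isClique_iff_completeEdges_subset: "isClique E D \<longleftrightarrow> completeEdges D \<subseteq> E"
  unfolding completeEdges_def isClique_def by auto

lemma isClique_join_edges_iff: "v \<notin> K \<Longrightarrow> isClique (E \<union> join_edges v D) K \<longleftrightarrow> isClique E K"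
  unfolding isClique_def by (auto simp: doubleton_eq_iff)

lemma kTree_wellformed: "kTree k V E \<Longrightarrow> finite V \<and> k \<le> card V \<and> E \<subseteq> completeEdges V"
proof (induction rule: kTree.induct)
  case (step V E C v)
  then have "join_edges v C \<subseteq> completeEdges (insert v V)" by auto
  moreover have "completeEdges V \<subseteq> completeEdges (insert v V)" by (rule completeEdges_mono) auto
  ultimately show ?case using step by auto
qed auto

lemma kTree_finite_edges: "kTree k V E \<Longrightarrow> finite E"
  using kTree_wellformed[of k V E] finite_completeEdges finite_subset by blast

lemma kTree_kCliqueI: "kTree k V E \<Longrightarrow> D \<subseteq> V \<Longrightarrow> card D = k \<Longrightarrow> isClique E D \<Longrightarrow> kClique k V E D"
  unfolding kClique_def using kTree_wellformed[of k V E] finite_subset by blast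

lemma kTree_card_eq_k: "kTree k V E \<Longrightarrow> card V = k \<Longrightarrow> E = completeEdges V"
proof (induction rule: kTree.induct)
  case (step V E C v)
  then show ?case using kTree_wellformed[OF step(1)] by auto
qed auto

lemma kTree_card_eq_k_join:
  assumes "kTree k V E" "card V = k" "kClique k V E D" "v \<notin> V"
  shows "E \<union> join_edges v D = completeEdges (insert v V)"
proof -
  have "D = V" using assms kTree_wellformed[OF assms(1)] unfolding kClique_def
    by (metis card_subset_eq)
  then show ?thesis using assms kTree_card_eq_k[OF assms(1,2)] completeEdges_insert[OF assms(4)] by simp
qed

lemma kTree_fresh_notin_edge: "kTree k V E \<Longrightarrow> v \<notin> V \<Longrightarrow> e \<in> E \<Longrightarrow> v \<notin> e"
  using kTree_wellformed[of k V E] notin_completeEdges[of v V e] by auto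

lemma neighbours_subset: "kTree k V E \<Longrightarrow> neighbours E x \<subseteq> V"
  using kTree_wellformed[of k V E] unfolding neighbours_def by auto

lemma neighbours_join_fresh:
  "kTree k V E \<Longrightarrow> v \<notin> V \<Longrightarrow> D \<subseteq> V \<Longrightarrow> neighbours (E \<union> join_edges v D) v = D"
  unfolding neighbours_def using kTree_fresh_notin_edge[of k V E v] by (auto simp: doubleton_eq_iff)

lemma neighbours_join_old: "kTree k V E \<Longrightarrow> v \<notin> V \<Longrightarrow> D \<subseteq> V \<Longrightarrow> x \<in> V \<Longrightarrow>
   neighbours (E \<union> join_edges v D) x = neighbours E x \<union> (if x \<in> D then {v} else {})"
  unfolding neighbours_def using kTree_fresh_notin_edge[of k V E v] by (auto simp: doubleton_eq_iff)

lemma isClique_join_fresh_subset: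
  assumes "kTree k V E" "v \<notin> V" "D \<subseteq> V" "isClique (E \<union> join_edges v D) K" "v \<in> K"
  shows "K - {v} \<subseteq> D"
proof -
  have "K - {v} \<subseteq> neighbours (E \<union> join_edges v D) v"
    using assms(4,5) unfolding isClique_def neighbours_def by auto
  then show ?thesis using neighbours_join_fresh[OF assms(1-3)] by simp
qed

text \<open>The \<open>i\<close>-th vertex of a construction sequence of a \<open>k\<close>-tree is joined to
  \<open>min i k\<close> earlier vertices.\<close>
definition kTree_edge_number :: "nat \<Rightarrow> nat \<Rightarrow> nat" where
  "kTree_edge_number k n = (\<Sum>i<n. min i k)"

lemma kTree_edge_number_Suc: "kTree_edge_number k (Suc n) = kTree_edge_number k n + min n k"
  unfolding kTree_edge_number_def by simp

lemma kTree_edge_number_le_k: "n \<le> k \<Longrightarrow> kTree_edge_number k n = n choose 2"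
proof (induction n)
  case (Suc n)
  have "Suc n choose 2 = n + (n choose 2)"
    using binomial_Suc_Suc[of n 1] by (simp add: numeral_2_eq_2)
  then show ?case using Suc by (simp add: kTree_edge_number_Suc)
qed (simp add: kTree_edge_number_def)

lemma card_kTree_edges: "kTree k V E \<Longrightarrow> card E = kTree_edge_number k (card V)"
proof (induction rule: kTree.induct)
  case (base V)
  then show ?case by (simp add: card_completeEdges kTree_edge_number_le_k)
next
  case (step V E C v)
  have "finite V" "k \<le> card V" "v \<notin> C" using kTree_wellformed[OF step(1)] step by auto
  moreover have "E \<inter> join_edges v C = {}" using kTree_fresh_notin_edge[OF step(1) step(5)] by auto
  ultimately show ?case
    using step kTree_finite_edges[OF step(1)] finite_subset[of C V]
    by (simp add: card_Un_disjoint card_join_edges kTree_edge_number_Suc)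
qed

lemma card_induced_edges_le:
  "kTree k V E \<Longrightarrow> U \<subseteq> V \<Longrightarrow> card (E \<inter> completeEdges U) \<le> kTree_edge_number k (card U)"
proof (induction arbitrary: U rule: kTree.induct)
  case (base V)
  then have "finite U" "card U \<le> k" using finite_subset card_mono by blast+
  moreover have "completeEdges V \<inter> completeEdges U = completeEdges U"
    using base completeEdges_mono by blast
  ultimately show ?case by (simp add: card_completeEdges kTree_edge_number_le_k)
next
  case (step V E C v)
  show ?case
  proof (cases "v \<in> U")
    case False
    then have "U \<subseteq> V" using step.prems by auto
    then show ?thesis using step.IH induced_join_edges_fresh[OF False] by simp
  next
    case True
    define U0 where "U0 = U - {v}"
    have V: "finite V" "k \<le> card V" using kTree_wellformed[OF step(1)] by auto
    have U0: "U0 \<subseteq> V" using step.prems unfolding U0_def by auto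
    have fU0: "finite U0" using finite_subset[OF U0 V(1)] .
    have "finite U" using step.prems V(1) finite_subset by auto
    then have cU: "card U = Suc (card U0)" using True card_Suc_Diff1 unfolding U0_def by metis
    have sub: "(E \<union> join_edges v C) \<inter> completeEdges U
        \<subseteq> (E \<inter> completeEdges U0) \<union> (\<lambda>c. {v, c}) ` (C \<inter> U0)"
    proof
      fix e assume e: "e \<in> (E \<union> join_edges v C) \<inter> completeEdges U"
      then obtain x y where xy: "x \<in> U" "y \<in> U" "x \<noteq> y" "e = {x, y}"
        unfolding completeEdges_def by auto
      show "e \<in> (E \<inter> completeEdges U0) \<union> (\<lambda>c. {v, c}) ` (C \<inter> U0)"
      proof (cases "e \<in> E")
        case True
        then have "v \<noteq> x" "v \<noteq> y" using kTree_fresh_notin_edge[OF step(1,5)] xy by auto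
        then show ?thesis using True xy U0_def by auto
      next
        case False
        then obtain c where c: "c \<in> C" "e = {v, c}" using e by auto
        then have "c \<in> U" "c \<noteq> v" using xy step(2,5) by (auto simp: doubleton_eq_iff)
        then show ?thesis using c U0_def by auto
      qed
    qed
    have "card ((E \<union> join_edges v C) \<inter> completeEdges U)
        \<le> card ((E \<inter> completeEdges U0) \<union> (\<lambda>c. {v, c}) ` (C \<inter> U0))"
      using kTree_finite_edges[OF step(1)] fU0 by (intro card_mono[OF _ sub]) auto
    also have "\<dots> \<le> card (E \<inter> completeEdges U0) + card ((\<lambda>c. {v, c}) ` (C \<inter> U0))"
      by (rule card_Un_le)
    also have "\<dots> \<le> kTree_edge_number k (card U0) + card (C \<inter> U0)"
      using step.IH[OF U0] card_image_le[of "C \<inter> U0" "\<lambda>c. {v, c}"] fU0 by simp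
    also have "card (C \<inter> U0) \<le> min (card U0) k"
      using card_mono[OF fU0, of "C \<inter> U0"] card_mono[of C "C \<inter> U0"] step(3)
        finite_subset[OF step(2) V(1)] by simp
    finally show ?thesis using cU by (simp add: kTree_edge_number_Suc)
  qed
qed

text \<open>Any sub-\<open>k\<close>-tree of a \<open>k\<close>-tree is induced: it has as many edges as the induced subgraph
  on its vertices can have.\<close>
lemma sub_kTree_induced:
  assumes "kTree k V E" "kTree k V' E'" "V' \<subseteq> V" "E' \<subseteq> E"
  shows "E' = E \<inter> completeEdges V'"
proof -
  have "E' \<subseteq> E \<inter> completeEdges V'" using assms kTree_wellformed[OF assms(2)] by auto
  moreover have "card (E \<inter> completeEdges V') \<le> card E'"
    using card_induced_edges_le[OF assms(1,3)] card_kTree_edges[OF assms(2)] by simp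
  moreover have "finite (E \<inter> completeEdges V')" using kTree_finite_edges[OF assms(1)] by simp
  ultimately show ?thesis using card_seteq by blast
qed

lemma kTree_degree_ge: "kTree k V E \<Longrightarrow> Suc k \<le> card V \<Longrightarrow> x \<in> V \<Longrightarrow> k \<le> card (neighbours E x)"
proof (induction arbitrary: x rule: kTree.induct)
  case (step V E C v)
  have V: "finite V" "k \<le> card V" using kTree_wellformed[OF step(1)] by auto
  show ?case
  proof (cases "card V = k")
    case True
    have "E \<union> join_edges v C = completeEdges (insert v V)"
      using kTree_card_eq_k_join[OF step(1) True kTree_kCliqueI[OF step(1-4)] step(5)] .
    then have "neighbours (E \<union> join_edges v C) x = insert v V - {x}"
      using neighbours_completeEdges[OF step.prems(2)] by (simp only:)
    moreover have "card (insert v V - {x}) = k"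
      using V True step(5) step.prems(2) by (simp add: card_Diff_singleton)
    ultimately show ?thesis by simp
  next
    case False
    show ?thesis
    proof (cases "x = v")
      case True
      then show ?thesis using neighbours_join_fresh[OF step(1,5,2)] step(3) by simp
    next
      case False
      then have x: "x \<in> V" using step.prems(2) by simp
      have sub: "neighbours E x \<subseteq> neighbours (E \<union> join_edges v C) x"
        using neighbours_join_old[OF step(1,5,2) x] by simp
      have "finite (neighbours (E \<union> join_edges v C) x)"
        using neighbours_subset[OF kTree.step[OF step(1-5)]] V(1) finite_subset by blast
      then have "card (neighbours E x) \<le> card (neighbours (E \<union> join_edges v C) x)"
        using card_mono sub by blast
      moreover have "k \<le> card (neighbours E x)" using step.IH[OF _ x] V \<open>card V \<noteq> k\<close> by simp
      ultimately show ?thesis by linarith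
    qed
  qed
qed simp

lemma kTree_delete_vertex:
  "kTree k V E \<Longrightarrow> Suc k \<le> card V \<Longrightarrow> w \<in> V \<Longrightarrow> card (neighbours E w) = k
   \<Longrightarrow> kTree k (V - {w}) {e \<in> E. w \<notin> e}"
proof (induction arbitrary: w rule: kTree.induct)
  case (step V E C v)
  have V: "finite V" "k \<le> card V" using kTree_wellformed[OF step(1)] by auto
  show ?case
  proof (cases "w = v")
    case True
    then have "insert v V - {w} = V" "{e \<in> E \<union> join_edges v C. w \<notin> e} = E"
      using step(5) kTree_fresh_notin_edge[OF step(1,5)] by auto
    then show ?thesis using step(1) by simp
  next
    case wv: False
    then have w: "w \<in> V" "insert v V - {w} = insert v (V - {w})" using step.prems(2) by auto
    show ?thesis
    proof (cases "card V = k")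
      case True
      have "E \<union> join_edges v C = completeEdges (insert v V)"
        using kTree_card_eq_k_join[OF step(1) True kTree_kCliqueI[OF step(1-4)] step(5)] .
      then have "{e \<in> E \<union> join_edges v C. w \<notin> e} = completeEdges (insert v V - {w})"
        by (simp only: completeEdges_remove)
      moreover have "card (insert v V - {w}) = k"
        using V True step(5) step.prems(2) by (simp add: card_Diff_singleton)
      ultimately show ?thesis using V kTree.base[of "insert v V - {w}" k] by simp
    next
      case False
      have "k \<le> card (neighbours E w)" using kTree_degree_ge[OF step(1) _ w(1)] V False by simp
      moreover have "v \<notin> neighbours E w" "finite (neighbours E w)"
        using neighbours_subset[OF step(1), of w] step(5) finite_subset[OF _ V(1)] by auto
      ultimately have wC: "w \<notin> C" and "card (neighbours E w) = k"
        using neighbours_join_old[OF step(1,5,2) w(1)] step.prems(3) by (auto split: if_splits)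
      then have "kTree k (V - {w}) {e \<in> E. w \<notin> e}" using step.IH[OF _ w(1)] V False by simp
      moreover have "isClique {e \<in> E. w \<notin> e} C" using step(4) wC unfolding isClique_def by auto
      ultimately have "kTree k (insert v (V - {w})) ({e \<in> E. w \<notin> e} \<union> join_edges v C)"
        using step(2,3,5) wC by (intro kTree.step) auto
      moreover have "{e \<in> E \<union> join_edges v C. w \<notin> e} = {e \<in> E. w \<notin> e} \<union> join_edges v C"
        using wC wv by auto
      ultimately show ?thesis using w by simp
    qed
  qed
qed simp

inductive rooted_kTree :: "nat \<Rightarrow> 'a set \<Rightarrow> 'a set \<Rightarrow> 'a set set \<Rightarrow> bool" for k :: nat and C :: "'a set" where
  root: "finite C \<Longrightarrow> card C = k \<Longrightarrow> rooted_kTree k C C (completeEdges C)"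
| join: "rooted_kTree k C V E \<Longrightarrow> kClique k V E D \<Longrightarrow> v \<notin> V
          \<Longrightarrow> rooted_kTree k C (insert v V) (E \<union> join_edges v D)"

lemma rooted_kTreeD: "rooted_kTree k C V E \<Longrightarrow> kTree k V E \<and> C \<subseteq> V \<and> finite C \<and> card C = k"
  by (induction rule: rooted_kTree.induct) (auto intro: kTree.intros simp: kClique_def)

lemma rooted_kTree_glue:
  "rooted_kTree k D V E \<Longrightarrow> rooted_kTree k C W F \<Longrightarrow> W \<inter> V = D \<Longrightarrow> isClique F D
   \<Longrightarrow> rooted_kTree k C (W \<union> V) (F \<union> E)"
proof (induction rule: rooted_kTree.induct)
  case root
  then have "W \<union> D = W" "F \<union> completeEdges D = F"
    by (auto simp: isClique_iff_completeEdges_subset)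
  then show ?case using root by simp
next
  case (join V E D' v)
  have "D \<subseteq> V" using rooted_kTreeD[OF join(1)] by simp
  then have "v \<notin> W" "W \<inter> V = D" using join.prems(2) join(3) by auto
  moreover have "kClique k (W \<union> V) (F \<union> E) D'"
    using join(2) unfolding kClique_def isClique_def by auto
  ultimately have "rooted_kTree k C (insert v (W \<union> V)) ((F \<union> E) \<union> join_edges v D')"
    using join by (intro rooted_kTree.join) auto
  then show ?case by (simp add: Un_assoc)
qed

text \<open>If the last vertex \<open>v\<close> of a construction sequence lies in \<open>C\<close>, then
  \<open>C \<union> {c} = D \<union> {v}\<close> for the unique \<open>c \<in> D - C\<close>: grow \<open>C \<union> {c}\<close> from \<open>C\<close>, then glue on the
  construction of the rest from \<open>D\<close>.\<close>
lemma kTree_rooted_at_clique: "kTree k V E \<Longrightarrow> kClique k V E C \<Longrightarrow> rooted_kTree k C V E"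
proof (induction arbitrary: C rule: kTree.induct)
  case (base V)
  then have "C = V" unfolding kClique_def by (metis card_subset_eq)
  then show ?case using base rooted_kTree.root by simp
next
  case (step V E D v)
  have D: "kClique k V E D" using kTree_kCliqueI[OF step(1-4)] .
  have C: "finite C" "card C = k" "C \<subseteq> insert v V" "isClique (E \<union> join_edges v D) C"
    using step(7) unfolding kClique_def by auto
  show ?case
  proof (cases "v \<in> C")
    case False
    then have "kClique k V E C" using C isClique_join_edges_iff[OF False] unfolding kClique_def by auto
    then show ?thesis using rooted_kTree.join[OF step.IH D step(5)] by simp
  next
    case True
    have CD: "C - {v} \<subseteq> D" using isClique_join_fresh_subset[OF step(1,5,2) C(4) True] .
    moreover have "card (C - {v}) + 1 = k" using C(1,2) True card_gt_0_iff[of C] by auto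
    moreover have "finite D" using D unfolding kClique_def by simp
    ultimately have "card (D - (C - {v})) = 1" using card_Diff_subset[of "C - {v}" D] step(3) C(1) by simp
    then obtain c where c: "D - (C - {v}) = {c}" using card_1_singletonE by blast
    then have cC: "c \<notin> C" and CcvD: "insert c C = insert v D" using True CD step(2,5) by auto
    have "rooted_kTree k C (insert c C) (completeEdges C \<union> join_edges c C)"
      using C cC rooted_kTree.root[OF C(1,2)]
      by (intro rooted_kTree.join) (auto simp: kClique_def isClique_iff_completeEdges_subset)
    then have "rooted_kTree k C (insert v D) (completeEdges (insert v D))"
      using completeEdges_insert[OF cC] CcvD by simp
    moreover have "insert v D \<inter> V = D" "isClique (completeEdges (insert v D)) D"
      using step(2,5) by (auto simp: isClique_def)
    ultimately have "rooted_kTree k C (insert v D \<union> V) (completeEdges (insert v D) \<union> E)"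
      using rooted_kTree_glue[OF step.IH[OF D]] by blast
    moreover have "completeEdges (insert v D) \<union> E = E \<union> join_edges v D"
      using completeEdges_insert[of v D] step(4,5) step(2)
      by (auto simp: isClique_iff_completeEdges_subset)
    ultimately show ?thesis using step(2) by (simp add: Un_absorb1 sup_commute)
  qed
qed

definition subKTree_sets :: "nat \<Rightarrow> 'a set \<Rightarrow> 'a set set \<Rightarrow> 'a set \<Rightarrow> 'a set set" where
  "subKTree_sets k V E C = {A. C \<subseteq> A \<and> A \<subseteq> V \<and> kTree k A (E \<inter> completeEdges A)}"

lemma subKTree_setsD: "A \<in> subKTree_sets k V E C \<Longrightarrow> C \<subseteq> A \<and> A \<subseteq> V"
  unfolding subKTree_sets_def by auto

lemma finite_subKTree_sets: "finite V \<Longrightarrow> finite (subKTree_sets k V E C)"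
  by (rule finite_subset[of _ "Pow V"]) (auto simp: subKTree_sets_def)

lemma subKTrees_eq_image:
  assumes "kTree k V E"
  shows "subKTrees k V E C = (\<lambda>A. (A, E \<inter> completeEdges A)) ` subKTree_sets k V E C"
proof (intro equalityI subsetI)
  fix S assume "S \<in> subKTrees k V E C"
  then obtain A E' where S: "S = (A, E')" "A \<subseteq> V" "E' \<subseteq> E" "kTree k A E'" "C \<subseteq> A"
    unfolding subKTrees_def by auto
  then have "E' = E \<inter> completeEdges A" using sub_kTree_induced[OF assms] by blast
  then show "S \<in> (\<lambda>A. (A, E \<inter> completeEdges A)) ` subKTree_sets k V E C"
    using S unfolding subKTree_sets_def by auto
qed (auto simp: subKTree_sets_def subKTrees_def)

lemma Ncount_eq_card_subKTree_sets: "kTree k V E \<Longrightarrow> Ncount k V E C = card (subKTree_sets k V E C)"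
  unfolding Ncount_def subKTrees_eq_image by (rule card_image) (auto simp: inj_on_def)

lemma sum_card_subKTrees:
  "kTree k V E \<Longrightarrow>
   (\<Sum>S\<in>subKTrees k V E C. real (card (fst S))) = (\<Sum>A\<in>subKTree_sets k V E C. real (card A))"
  unfolding subKTrees_eq_image by (subst sum.reindex) (auto simp: inj_on_def)

lemma subKTree_sets_root: "finite C \<Longrightarrow> card C = k \<Longrightarrow> subKTree_sets k C (completeEdges C) C = {C}"
  unfolding subKTree_sets_def using kTree.base[of C k] by (auto simp: Int_absorb1 completeEdges_mono)

lemma kTree_in_subKTree_sets: "kTree k V E \<Longrightarrow> C \<subseteq> V \<Longrightarrow> V \<in> subKTree_sets k V E C"
  unfolding subKTree_sets_def using kTree_wellformed[of k V E] by (simp add: Int_absorb2)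

lemma induced_join_edges:
  assumes "kTree k V E" "v \<notin> V" "D \<subseteq> A" "A \<subseteq> V"
  shows "(E \<union> join_edges v D) \<inter> completeEdges (insert v A) = (E \<inter> completeEdges A) \<union> join_edges v D"
proof -
  have vA: "v \<notin> A" using assms by auto
  have "E \<inter> join_edges v A = {}" using kTree_fresh_notin_edge[OF assms(1,2)] by auto
  moreover have "join_edges v D \<inter> completeEdges A = {}" using notin_completeEdges[OF vA] by auto
  moreover have "join_edges v D \<inter> join_edges v A = join_edges v D" using assms(3) by auto
  ultimately show ?thesis unfolding completeEdges_insert[OF vA] by blast
qed

lemma subKTree_through_fresh_vertex:
  assumes T: "kTree k V E" "kClique k V E D" "v \<notin> V" and C: "C \<subseteq> V" "card C = k"
    and A: "A \<in> subKTree_sets k (insert v V) (E \<union> join_edges v D) C" "v \<in> A"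
  shows "D \<subseteq> A - {v} \<and> A - {v} \<in> subKTree_sets k V E C"
proof -
  define H where "H = (E \<union> join_edges v D) \<inter> completeEdges A"
  have A': "C \<subseteq> A" "A \<subseteq> insert v V" "kTree k A H" using A(1) unfolding subKTree_sets_def H_def by auto
  have D: "D \<subseteq> V" "finite D" "card D = k" using T(2) unfolding kClique_def by auto
  have "finite A" using kTree_wellformed[OF A'(3)] by simp
  moreover have "v \<notin> C" "finite C" using C T(3) kTree_wellformed[OF T(1)] finite_subset by auto
  ultimately have "Suc k \<le> card A" using A' A(2) C card_mono[of A "insert v C"] by simp
  moreover have nb: "neighbours H v = D \<inter> A"
    using neighbours_join_fresh[OF T(1,3) D(1)] D(1) T(3) A(2)
    unfolding H_def neighbours_def by auto
  ultimately have "k \<le> card (D \<inter> A)" using kTree_degree_ge[OF A'(3) _ A(2)] by simp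
  then have DA: "D \<subseteq> A" using D card_seteq[of D "D \<inter> A"] by auto
  then have "kTree k (A - {v}) {e \<in> H. v \<notin> e}"
    using kTree_delete_vertex[OF A'(3) \<open>Suc k \<le> card A\<close> A(2)] nb D by (simp add: Int_absorb2)
  moreover have "{e \<in> H. v \<notin> e} = E \<inter> completeEdges (A - {v})"
    using completeEdges_remove[of A v] kTree_fresh_notin_edge[OF T(1,3)] unfolding H_def by blast
  ultimately show ?thesis using DA D(1) T(3) A' \<open>v \<notin> C\<close> unfolding subKTree_sets_def by auto
qed

lemma subKTree_sets_join:
  assumes T: "kTree k V E" "kClique k V E D" "v \<notin> V" and C: "C \<subseteq> V" "card C = k"
  shows "subKTree_sets k (insert v V) (E \<union> join_edges v D) C
       = subKTree_sets k V E C \<union> insert v ` {A \<in> subKTree_sets k V E C. D \<subseteq> A}"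
proof (intro equalityI subsetI)
  fix A assume A: "A \<in> subKTree_sets k (insert v V) (E \<union> join_edges v D) C"
  show "A \<in> subKTree_sets k V E C \<union> insert v ` {A \<in> subKTree_sets k V E C. D \<subseteq> A}"
  proof (cases "v \<in> A")
    case False
    then show ?thesis using A induced_join_edges_fresh[OF False] unfolding subKTree_sets_def by auto
  next
    case True
    then have "A = insert v (A - {v})" by auto
    moreover have "A - {v} \<in> {A \<in> subKTree_sets k V E C. D \<subseteq> A}"
      using subKTree_through_fresh_vertex[OF T C A True] by simp
    ultimately have "A \<in> insert v ` {A \<in> subKTree_sets k V E C. D \<subseteq> A}" by (rule image_eqI)
    then show ?thesis by (rule UnI2)
  qed
next
  fix A assume "A \<in> subKTree_sets k V E C \<union> insert v ` {A \<in> subKTree_sets k V E C. D \<subseteq> A}"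
  then consider "A \<in> subKTree_sets k V E C"
    | A0 where "A = insert v A0" "A0 \<in> subKTree_sets k V E C" "D \<subseteq> A0" by blast
  then show "A \<in> subKTree_sets k (insert v V) (E \<union> join_edges v D) C"
  proof cases
    case 1
    then have "v \<notin> A" using T(3) subKTree_setsD by blast
    then show ?thesis using 1 induced_join_edges_fresh[of v A E D] unfolding subKTree_sets_def by auto
  next
    case 2
    then have "C \<subseteq> A0" "A0 \<subseteq> V" "kTree k A0 (E \<inter> completeEdges A0)"
      unfolding subKTree_sets_def by auto
    moreover have "isClique (E \<inter> completeEdges A0) D"
      using T(2) 2(3) unfolding kClique_def isClique_def by auto
    ultimately have "kTree k (insert v A0) ((E \<inter> completeEdges A0) \<union> join_edges v D)"
      using T 2 by (intro kTree.step) (auto simp: kClique_def)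
    then show ?thesis
      using 2 induced_join_edges[OF T(1,3) 2(3) \<open>A0 \<subseteq> V\<close>] \<open>C \<subseteq> A0\<close> \<open>A0 \<subseteq> V\<close>
      unfolding subKTree_sets_def by auto
  qed
qed

lemma rooted_subKTree_sets_join:
  assumes "rooted_kTree k C V E" "kClique k V E D" "v \<notin> V"
  shows "subKTree_sets k (insert v V) (E \<union> join_edges v D) C
     = subKTree_sets k V E C \<union> insert v ` {A \<in> subKTree_sets k V E C. D \<subseteq> A}"
  using subKTree_sets_join[OF _ assms(2,3)] rooted_kTreeD[OF assms(1)] by simp

lemma subKTree_sets_lattice: "rooted_kTree k C V E \<Longrightarrow> set_lattice C (subKTree_sets k V E C)"
proof (induction rule: rooted_kTree.induct)
  case root
  then show ?case by (simp add: subKTree_sets_root set_lattice_def)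
next
  case (join V E D v)
  then have "\<forall>A\<in>subKTree_sets k V E C. v \<notin> A" using subKTree_setsD by blast
  then show ?case unfolding rooted_subKTree_sets_join[OF join(1-3)] by (rule set_lattice_extend[OF join.IH])
qed

lemma subKTree_sets_join_counts:
  assumes r: "rooted_kTree k C V E" and D: "kClique k V E D" and v: "v \<notin> V"
  defines "F \<equiv> subKTree_sets k V E C" and "FD \<equiv> {A \<in> subKTree_sets k V E C. D \<subseteq> A}"
    and "F' \<equiv> subKTree_sets k (insert v V) (E \<union> join_edges v D) C"
  shows "card F' = card F + card FD" and "excess C F' = excess C F + excess C FD + card FD"
proof -
  have C: "finite C" "C \<subseteq> V" and fV: "finite V"
    using rooted_kTreeD[OF r] kTree_wellformed[of k V E] by auto
  have fF: "finite F" "finite FD" using finite_subKTree_sets[OF fV] unfolding F_def FD_def by auto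
  have nv: "v \<notin> A" if "A \<in> F" for A using that subKTree_setsD v unfolding F_def by blast
  then have disj: "F \<inter> insert v ` FD = {}" unfolding FD_def F_def by auto
  have inj: "inj_on (insert v) FD"
    using nv unfolding inj_on_def FD_def F_def by (simp add: insert_ident)
  have F': "F' = F \<union> insert v ` FD"
    unfolding F'_def F_def FD_def by (rule rooted_subKTree_sets_join[OF r D v])
  show "card F' = card F + card FD"
    unfolding F' using fF disj card_image[OF inj] by (simp add: card_Un_disjoint)
  have "card (insert v A - C) = card (A - C) + 1" if "A \<in> FD" for A
  proof -
    have "A \<subseteq> V" using that subKTree_setsD unfolding FD_def by blast
    then have "finite A" using fV finite_subset by blast
    then show ?thesis using nv[of A] that C v unfolding FD_def F_def by (auto simp: insert_Diff_if)
  qed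
  then have "excess C (insert v ` FD) = excess C FD + card FD"
    unfolding excess_def by (simp add: sum.reindex[OF inj] sum.distrib)
  then show "excess C F' = excess C F + excess C FD + card FD"
    unfolding F' excess_def using fF disj by (simp add: sum.union_disjoint)
qed

lemma card_subKTree_sets_ge: "rooted_kTree k C V E \<Longrightarrow> card V - k + 1 \<le> card (subKTree_sets k V E C)"
proof (induction rule: rooted_kTree.induct)
  case (join V E D v)
  have T: "kTree k V E" "C \<subseteq> V" using rooted_kTreeD[OF join(1)] by auto
  have V: "finite V" "k \<le> card V" using kTree_wellformed[OF T(1)] by auto
  have "V \<in> {A \<in> subKTree_sets k V E C. D \<subseteq> A}"
    using kTree_in_subKTree_sets[OF T] join(2) unfolding kClique_def by simp
  moreover have "finite {A \<in> subKTree_sets k V E C. D \<subseteq> A}"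
    using finite_subKTree_sets[OF V(1)] by simp
  ultimately have "0 < card {A \<in> subKTree_sets k V E C. D \<subseteq> A}"
    using card_gt_0_iff by blast
  moreover have "card (insert v V) = card V + 1" using V(1) join(3) by simp
  ultimately show ?case
    using join.IH V(2) subKTree_sets_join_counts(1)[OF join(1-3)] by linarith
qed (simp add: subKTree_sets_root)

lemma quadratic_count_step:
  fixes N m n S t :: real
  assumes m: "1 \<le> m" and N: "n + 1 \<le> N"
    and S: "2 * S \<le> N * (N - 1)" "2 * S = N * (N - 1) \<longleftrightarrow> N = n + 1"
    and t: "t \<le> m * N" "m = 1 \<Longrightarrow> t = n + 1"
  shows "2 * (S + t) \<le> (N + m) * (N + m - 1)
    \<and> (2 * (S + t) = (N + m) * (N + m - 1) \<longleftrightarrow> N + m = n + 2)"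
proof -
  have expand: "(N + m) * (N + m - 1) = N * (N - 1) + 2 * (m * N) + m * (m - 1)"
    by (simp add: algebra_simps)
  have mm: "0 \<le> m * (m - 1)" using m by simp
  have le: "2 * (S + t) \<le> (N + m) * (N + m - 1)"
    using S(1) t(1) mm unfolding expand by (simp add: algebra_simps)
  have "2 * (S + t) = (N + m) * (N + m - 1) \<longleftrightarrow> N + m = n + 2"
  proof
    assume eq: "2 * (S + t) = (N + m) * (N + m - 1)"
    have "m * (m - 1) \<le> 0" using eq S(1) t(1) unfolding expand by (simp add: algebra_simps)
    then have "m = 1" using m by (simp add: mult_le_0_iff)
    moreover have "m * N \<le> t" using eq S(1) mm unfolding expand by (simp add: algebra_simps)
    ultimately show "N + m = n + 2" using t by simp
  next
    assume sum: "N + m = n + 2"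
    have "m = 1" using sum m N by linarith
    moreover have "N = n + 1" using sum m N by linarith
    ultimately show "2 * (S + t) = (N + m) * (N + m - 1)" using S(2) t(2) unfolding expand by simp
  qed
  with le show ?thesis by blast
qed

text \<open>The upper bound: each new vertex adds \<open>m \<ge> 1\<close> new sub-\<open>k\<close>-trees, each of excess at most
  the current number of sub-\<open>k\<close>-trees.\<close>
lemma excess_subKTree_sets_le:
  assumes "rooted_kTree k C V E"
  defines "N \<equiv> card (subKTree_sets k V E C)"
  shows "2 * excess C (subKTree_sets k V E C) \<le> real N * (real N - 1)
    \<and> (2 * excess C (subKTree_sets k V E C) = real N * (real N - 1) \<longleftrightarrow> N = card V - k + 1)"
  using assms(1) unfolding N_def
proof (induction rule: rooted_kTree.induct)
  case root
  then show ?case by (simp add: subKTree_sets_root excess_def)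
next
  case (join V E D v)
  let ?F = "subKTree_sets k V E C" and ?FD = "{A \<in> subKTree_sets k V E C. D \<subseteq> A}"
    and ?F' = "subKTree_sets k (insert v V) (E \<union> join_edges v D) C"
  have T: "kTree k V E" "C \<subseteq> V" "card C = k" "finite C" using rooted_kTreeD[OF join(1)] by auto
  have V: "finite V" "k \<le> card V" using kTree_wellformed[OF T(1)] by auto
  have fF: "finite ?F" using finite_subKTree_sets[OF V(1)] .
  have VFD: "V \<in> ?FD" using kTree_in_subKTree_sets[OF T(1,2)] join(2) unfolding kClique_def by simp
  have cVC: "card (V - C) = card V - k" using card_Diff_subset[OF T(4,2)] T(3) by simp
  define N m S t where "N = real (card ?F)" and "m = real (card ?FD)"
    and "S = excess C ?F" and "t = excess C ?FD + card ?FD"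
  have "?FD \<noteq> {}" "finite ?FD" using VFD fF by auto
  then have "1 \<le> m" unfolding m_def by (simp add: Suc_le_eq card_gt_0_iff)
  moreover have N: "real (card V - k) + 1 \<le> N" using card_subKTree_sets_ge[OF join(1)] unfolding N_def by linarith
  moreover have "2 * S \<le> N * (N - 1)"
    using conjunct1[OF join.IH] unfolding N_def S_def .
  moreover have "2 * S = N * (N - 1) \<longleftrightarrow> N = real (card V - k) + 1"
    using conjunct2[OF join.IH] unfolding N_def S_def by (metis of_nat_1 of_nat_add of_nat_eq_iff)
  moreover have "t \<le> m * N"
  proof -
    have "real (card (A - C)) + 1 \<le> N" if "A \<in> ?FD" for A
    proof -
      have "A - C \<subseteq> V - C" using that subKTree_setsD by blast
      then have "card (A - C) \<le> card (V - C)" using V(1) by (simp add: card_mono)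
      then have "card (A - C) \<le> card V - k" using cVC by simp
      then show ?thesis using N by linarith
    qed
    then have "(\<Sum>A\<in>?FD. real (card (A - C)) + 1) \<le> (\<Sum>A\<in>?FD. N)" by (rule sum_mono)
    then show ?thesis unfolding t_def m_def excess_def by (simp add: sum.distrib)
  qed
  moreover have "t = real (card V - k) + 1" if "m = 1"
  proof -
    obtain X where "?FD = {X}" using \<open>m = 1\<close> card_1_singletonE unfolding m_def by auto
    then have "?FD = {V}" using VFD by auto
    then show ?thesis using cVC unfolding t_def excess_def by simp
  qed
  ultimately have q: "2 * (S + t) \<le> (N + m) * (N + m - 1)
    \<and> (2 * (S + t) = (N + m) * (N + m - 1) \<longleftrightarrow> N + m = real (card V - k) + 2)"
    by (rule quadratic_count_step)
  have Nm: "N + m = real (card ?F')"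
    using subKTree_sets_join_counts(1)[OF join(1-3)] unfolding N_def m_def by simp
  have St: "S + t = excess C ?F'"
    using subKTree_sets_join_counts(2)[OF join(1-3)] unfolding S_def t_def by simp
  have n: "real (card V - k) + 2 = real (card (insert v V) - k + 1)" using V join(3) by simp
  show ?case using q unfolding Nm St n of_nat_eq_iff .
qed

definition is_star :: "'a set \<Rightarrow> 'a set \<Rightarrow> 'a set set \<Rightarrow> bool" where
  "is_star C V E \<longleftrightarrow> (\<forall>x\<in>V - C. \<forall>y\<in>C. {x, y} \<in> E) \<and> (\<forall>x\<in>V - C. \<forall>y\<in>V - C. x \<noteq> y \<longrightarrow> {x, y} \<notin> E)"

lemma is_star_insert_iff:
  assumes "v \<notin> V" "v \<notin> C"
  shows "is_star C (insert v V) E \<longleftrightarrow> is_star C V E \<and> (\<forall>y\<in>C. {v, y} \<in> E) \<and> (\<forall>y\<in>V - C. {v, y} \<notin> E)"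
proof -
  have "insert v V - C = insert v (V - C)" "v \<notin> V - C" using assms by auto
  moreover have "{x, v} = {v, x}" for x by (rule insert_commute)
  moreover have "x \<in> V - C \<Longrightarrow> x \<noteq> v" for x using assms(1) by auto
  ultimately show ?thesis unfolding is_star_def by auto
qed

lemma is_star_cong:
  assumes "\<And>x y. x \<in> V \<Longrightarrow> y \<in> V \<Longrightarrow> {x, y} \<in> E \<longleftrightarrow> {x, y} \<in> E'" "C \<subseteq> V"
  shows "is_star C V E \<longleftrightarrow> is_star C V E'"
  using assms unfolding is_star_def by blast

lemma is_star_join_iff:
  assumes T: "kTree k V E" "D \<subseteq> V" "v \<notin> V" and C: "C \<subseteq> V"
  shows "is_star C (insert v V) (E \<union> join_edges v D) \<longleftrightarrow> is_star C V E \<and> D = C"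
proof -
  have old: "is_star C V (E \<union> join_edges v D) \<longleftrightarrow> is_star C V E"
    using T(3) C by (intro is_star_cong) (auto simp: doubleton_eq_iff)
  have new: "{v, y} \<in> E \<union> join_edges v D \<longleftrightarrow> y \<in> D" for y
    using kTree_fresh_notin_edge[OF T(1,3), of "{v, y}"] T(2,3) by (auto simp: doubleton_eq_iff)
  have "v \<notin> C" using C T(3) by auto
  then show ?thesis unfolding is_star_insert_iff[OF T(3) \<open>v \<notin> C\<close>] old new using T(2) by auto
qed

lemma subKTree_sets_join_cube_iff:
  assumes r: "rooted_kTree k C V E" and D: "kClique k V E D" and v: "v \<notin> V"
  shows "subKTree_sets k (insert v V) (E \<union> join_edges v D) C = (\<lambda>X. C \<union> X) ` Pow (insert v V - C)
    \<longleftrightarrow> subKTree_sets k V E C = (\<lambda>X. C \<union> X) ` Pow (V - C) \<and> D = C"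
    (is "?F' = ?cube' \<longleftrightarrow> ?F = ?cube \<and> D = C")
proof -
  have C: "finite C" "card C = k" "C \<subseteq> V" using rooted_kTreeD[OF r] by auto
  have vC: "v \<notin> C" using C v by auto
  have nv: "v \<notin> A" "C \<subseteq> A" if "A \<in> ?F" for A using that subKTree_setsD v by blast+
  have F': "?F' = ?F \<union> insert v ` {A \<in> ?F. D \<subseteq> A}" by (rule rooted_subKTree_sets_join[OF r D v])
  have cube': "?cube' = ?cube \<union> insert v ` ?cube"
  proof -
    have "insert v V - C = insert v (V - C)" using vC by auto
    then have "?cube' = ?cube \<union> (\<lambda>X. C \<union> X) ` insert v ` Pow (V - C)"
      by (simp only: Pow_insert image_Un)
    also have "(\<lambda>X. C \<union> X) ` insert v ` Pow (V - C) = insert v ` ?cube" by (simp add: image_image)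
    finally show ?thesis .
  qed
  show ?thesis
  proof
    assume eq: "?F' = ?cube'"
    have "insert v C \<in> ?cube'" using vC by (intro image_eqI[of _ _ "{v}"]) auto
    then obtain A where A: "insert v C = insert v A" "A \<in> ?F" "D \<subseteq> A"
      using nv(1) unfolding eq[symmetric] F' by auto
    then have "A = C" using nv[OF A(2)] vC by (metis insert_ident)
    then have "D = C" using A(3) D C card_subset_eq unfolding kClique_def by metis
    moreover have "?F = {A \<in> ?F'. v \<notin> A}" using nv(1) unfolding F' by auto
    then have "?F = ?cube" unfolding eq cube' using vC v by auto
    ultimately show "?F = ?cube \<and> D = C" by simp
  next
    assume "?F = ?cube \<and> D = C"
    moreover from this have "{A \<in> ?F. D \<subseteq> A} = ?F" using nv(2) by auto
    ultimately show "?F' = ?cube'" unfolding F' cube' by simp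
  qed
qed

lemma subKTree_sets_cube_iff_star:
  "rooted_kTree k C V E \<Longrightarrow> subKTree_sets k V E C = (\<lambda>X. C \<union> X) ` Pow (V - C) \<longleftrightarrow> is_star C V E"
proof (induction rule: rooted_kTree.induct)
  case root
  then show ?case by (simp add: subKTree_sets_root is_star_def)
next
  case (join V E D v)
  have "kTree k V E" "C \<subseteq> V" "finite C" "card C = k" using rooted_kTreeD[OF join(1)] by auto
  then show ?case
    using subKTree_sets_join_cube_iff[OF join(1-3)] is_star_join_iff[OF _ _ join(3)] join(2) join.IH
    unfolding kClique_def by simp
qed

abbreviation kLeaves :: "nat \<Rightarrow> 'a set \<Rightarrow> 'a set set \<Rightarrow> 'a set" where
  "kLeaves k V E \<equiv> {x. kLeaf k V E x}"

definition clique_degree :: "nat \<Rightarrow> 'a set \<Rightarrow> 'a set set \<Rightarrow> 'a \<Rightarrow> nat" where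
  "clique_degree k V E x = card {K. kClique (k + 1) V E K \<and> x \<in> K}"

lemma kLeaf_iff_clique_degree: "kLeaf k V E x \<longleftrightarrow> x \<in> V \<and> clique_degree k V E x = 1"
  unfolding kLeaf_def clique_degree_def ..

lemma finite_kCliques: "finite V \<Longrightarrow> finite {K. kClique k' V E K \<and> P K}"
  by (rule finite_subset[of _ "Pow V"]) (auto simp: kClique_def)

lemma clique_degree_outside: "x \<notin> V \<Longrightarrow> clique_degree k V E x = 0"
  unfolding clique_degree_def kClique_def by (metis (no_types, lifting) card.empty empty_Collect_eq subsetD)

lemma clique_degree_card_k: "finite V \<Longrightarrow> card V = k \<Longrightarrow> clique_degree k V E x = 0"
proof -
  assume V: "finite V" "card V = k"
  have "\<not> kClique (k + 1) V E K" for K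
    using V card_mono[of V K] unfolding kClique_def by auto
  then show ?thesis unfolding clique_degree_def by simp
qed

lemma kCliques_join:
  assumes T: "kTree k V E" "kClique k V E D" "v \<notin> V"
  shows "{K. kClique (k + 1) (insert v V) (E \<union> join_edges v D) K}
       = insert (insert v D) {K. kClique (k + 1) V E K}"
proof (intro equalityI subsetI)
  fix K assume "K \<in> {K. kClique (k + 1) (insert v V) (E \<union> join_edges v D) K}"
  then have K: "K \<subseteq> insert v V" "finite K" "card K = k + 1" "isClique (E \<union> join_edges v D) K"
    unfolding kClique_def by auto
  show "K \<in> insert (insert v D) {K. kClique (k + 1) V E K}"
  proof (cases "v \<in> K")
    case False
    then show ?thesis using K isClique_join_edges_iff[OF False] unfolding kClique_def by auto
  next
    case True
    have D: "D \<subseteq> V" "finite D" "card D = k" using T(2) unfolding kClique_def by auto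
    have "K - {v} \<subseteq> D" using isClique_join_fresh_subset[OF T(1,3) D(1) K(4) True] .
    moreover have "card (K - {v}) = k" using K(2,3) True by simp
    ultimately have "K - {v} = D" using card_subset_eq[OF D(2)] D(3) by metis
    then show ?thesis using True by auto
  qed
next
  fix K assume K: "K \<in> insert (insert v D) {K. kClique (k + 1) V E K}"
  show "K \<in> {K. kClique (k + 1) (insert v V) (E \<union> join_edges v D) K}"
  proof (cases "K = insert v D")
    case True
    have "v \<notin> D" "finite D" "card D = k" "D \<subseteq> V" using T(2,3) unfolding kClique_def by auto
    moreover have "isClique (E \<union> join_edges v D) (insert v D)" using T(2) unfolding kClique_def isClique_def by auto
    ultimately show ?thesis using True unfolding kClique_def by auto
  next
    case False
    then show ?thesis using K unfolding kClique_def isClique_def by auto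
  qed
qed

lemma clique_degree_join:
  assumes T: "kTree k V E" "kClique k V E D" "v \<notin> V"
  shows "clique_degree k (insert v V) (E \<union> join_edges v D) x
       = clique_degree k V E x + (if x \<in> insert v D then 1 else 0)"
proof -
  let ?K = "{K. kClique (k + 1) V E K \<and> x \<in> K}"
  have eq: "{K. kClique (k + 1) (insert v V) (E \<union> join_edges v D) K \<and> x \<in> K}
      = (if x \<in> insert v D then insert (insert v D) ?K else ?K)"
    using kCliques_join[OF T] by auto
  have "insert v D \<notin> ?K" using T(3) unfolding kClique_def by auto
  moreover have "finite ?K" using finite_kCliques kTree_wellformed[OF T(1)] by blast
  ultimately show ?thesis unfolding clique_degree_def eq by (cases "x \<in> insert v D") auto
qed

lemma clique_degree_pos: "kTree k V E \<Longrightarrow> Suc k \<le> card V \<Longrightarrow> x \<in> V \<Longrightarrow> 1 \<le> clique_degree k V E x"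
proof (induction arbitrary: x rule: kTree.induct)
  case (step V E C v)
  have C: "kClique k V E C" using kTree_kCliqueI[OF step(1-4)] .
  show ?case
  proof (cases "x \<in> insert v C")
    case True
    then show ?thesis using clique_degree_join[OF step(1) C step(5)] by simp
  next
    case False
    then have x: "x \<in> V" using step.prems(2) by simp
    have V: "finite V" "k \<le> card V" using kTree_wellformed[OF step(1)] by auto
    have "C \<noteq> V" using False x by auto
    then have "card V \<noteq> k" using card_subset_eq[OF V(1) step(2)] step(3) by auto
    then have "1 \<le> clique_degree k V E x" using step.IH[OF _ x] V(2) by simp
    then show ?thesis using clique_degree_join[OF step(1) C step(5)] by simp
  qed
qed simp

lemma kLeaves_join:
  assumes T: "kTree k V E" "kClique k V E D" "v \<notin> V" and V: "Suc k \<le> card V"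
  shows "kLeaves k (insert v V) (E \<union> join_edges v D) = insert v (kLeaves k V E - D)"
proof -
  have deg: "clique_degree k (insert v V) (E \<union> join_edges v D) x
      = clique_degree k V E x + (if x \<in> insert v D then 1 else 0)" for x
    using clique_degree_join[OF T] .
  have "v \<notin> D" using T(2,3) unfolding kClique_def by auto
  then have "clique_degree k (insert v V) (E \<union> join_edges v D) v = 1"
    using deg[of v] clique_degree_outside[OF T(3)] by simp
  then have leaf_v: "kLeaf k (insert v V) (E \<union> join_edges v D) v"
    unfolding kLeaf_iff_clique_degree by simp
  have leaf_old: "kLeaf k (insert v V) (E \<union> join_edges v D) x \<longleftrightarrow> kLeaf k V E x \<and> x \<notin> D"
    if "x \<noteq> v" for x
    using deg[of x] clique_degree_pos[OF T(1) V, of x] that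
    unfolding kLeaf_iff_clique_degree by auto
  have "\<not> kLeaf k V E v" using T(3) unfolding kLeaf_def by simp
  then show ?thesis using leaf_v leaf_old by (intro set_eqI, case_tac "x = v") auto
qed

lemma kLeaves_join_card_k:
  assumes T: "kTree k V E" "kClique k V E D" "v \<notin> V" and V: "card V = k"
  shows "kLeaves k (insert v V) (E \<union> join_edges v D) = insert v V"
proof -
  have "D = V" using T(2) V kTree_wellformed[OF T(1)] card_subset_eq unfolding kClique_def by metis
  then have "clique_degree k (insert v V) (E \<union> join_edges v D) x = (if x \<in> insert v V then 1 else 0)" for x
    using clique_degree_join[OF T] clique_degree_card_k[OF _ V] kTree_wellformed[OF T(1)] by simp
  then show ?thesis unfolding kLeaf_iff_clique_degree by auto
qed

lemma rooted_kTree_card_k: "rooted_kTree k C V E \<Longrightarrow> card V = k \<Longrightarrow> V = C \<and> E = completeEdges C"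
proof -
  assume r: "rooted_kTree k C V E" and V: "card V = k"
  have "kTree k V E" "C \<subseteq> V" "card C = k" using rooted_kTreeD[OF r] by auto
  moreover have "finite V" using kTree_wellformed[OF \<open>kTree k V E\<close>] by simp
  ultimately show ?thesis using V kTree_card_eq_k card_subset_eq by metis
qed

lemma rooted_kTree_last_join:
  assumes "rooted_kTree k C V E" "card V \<noteq> k"
  obtains V0 E0 D0 w where "V = insert w V0" "E = E0 \<union> join_edges w D0" "rooted_kTree k C V0 E0"
    "kClique k V0 E0 D0" "w \<notin> V0"
  using assms by (cases rule: rooted_kTree.cases) auto

lemma card_subKTree_sets_two_joins:
  assumes r0: "rooted_kTree k C V0 E0" "kClique k V0 E0 D0" "w \<notin> V0"
    and V: "V = insert w V0" "E = E0 \<union> join_edges w D0" and D: "kClique k V E D" and v: "v \<notin> V"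
  shows "card (subKTree_sets k (insert v V) (E \<union> join_edges v D) C) = card (insert v V) - k + 1
     \<longleftrightarrow> card (subKTree_sets k V E C) = card V - k + 1 \<and> w \<in> D"
proof -
  have r: "rooted_kTree k C V E" using rooted_kTree.join[OF r0] V by simp
  let ?Fp = "subKTree_sets k V0 E0 C" and ?FpD = "{A \<in> subKTree_sets k V0 E0 C. D0 \<subseteq> A}"
  let ?F = "subKTree_sets k V E C" and ?FD = "{A \<in> subKTree_sets k V E C. D \<subseteq> A}"
  have T0: "kTree k V0 E0" "C \<subseteq> V0" using rooted_kTreeD[OF r0(1)] by auto
  have T: "kTree k V E" "C \<subseteq> V" using rooted_kTreeD[OF r] by auto
  have V0: "finite V0" "k \<le> card V0" using kTree_wellformed[OF T0(1)] by auto
  have fF: "finite ?Fp" "finite ?F"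
    using finite_subKTree_sets[OF V0(1)] finite_subKTree_sets[of V] V(1) V0(1) by auto
  have F: "?F = ?Fp \<union> insert w ` ?FpD" using rooted_subKTree_sets_join[OF r0] V by simp
  have NF: "card ?F = card ?Fp + card ?FpD"
    unfolding V(1,2) by (rule subKTree_sets_join_counts(1)[OF r0])
  have N': "card (subKTree_sets k (insert v V) (E \<union> join_edges v D) C) = card ?F + card ?FD"
    using subKTree_sets_join_counts(1)[OF r D v] .
  have N0: "card V0 - k + 1 \<le> card ?Fp" using card_subKTree_sets_ge[OF r0(1)] .
  have N: "card V - k + 1 \<le> card ?F" using card_subKTree_sets_ge[OF r] .
  have "V \<in> ?FD" using kTree_in_subKTree_sets[OF T] D unfolding kClique_def by simp
  then have m: "1 \<le> card ?FD" using fF(2) by (auto simp: Suc_le_eq card_gt_0_iff)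
  have cV: "card V = card V0 + 1" "card (insert v V) = card V + 1" using V V0(1) r0(3) v by auto
  show ?thesis
  proof (cases "w \<in> D")
    case False
    then have "D \<subseteq> V0" using D V(1) unfolding kClique_def by auto
    then have "V0 \<in> ?FD" using kTree_in_subKTree_sets[OF T0] F by simp
    moreover have "V0 \<noteq> V" using V(1) r0(3) by auto
    ultimately have "{V0, V} \<subseteq> ?FD" using \<open>V \<in> ?FD\<close> by simp
    then have "card {V0, V} \<le> card ?FD" using fF(2) by (simp add: card_mono)
    then have "2 \<le> card ?FD" using \<open>V0 \<noteq> V\<close> by simp
    then show ?thesis using N' N cV False by linarith
  next
    case True
    have "?FD \<subseteq> insert w ` ?FpD"
    proof
      fix A assume A: "A \<in> ?FD"
      then have "w \<in> A" using True by auto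
      moreover have "w \<notin> B" if "B \<in> ?Fp" for B using that subKTree_setsD r0(3) by blast
      ultimately show "A \<in> insert w ` ?FpD" using A F by blast
    qed
    then have "card ?FD \<le> card (insert w ` ?FpD)" using fF(1) by (simp add: card_mono)
    also have "\<dots> \<le> card ?FpD" using fF(1) by (simp add: card_image_le)
    finally have "card ?FD \<le> card ?FpD" .
    then show ?thesis using N' N N0 NF m cV True by linarith
  qed
qed

lemma kLeaves_two_joins_card_k:
  assumes r0: "rooted_kTree k C V0 E0" "kClique k V0 E0 D0" "w \<notin> V0" "card V0 = k"
    and V: "V = insert w V0" "E = E0 \<union> join_edges w D0" and D: "kClique k V E D" and v: "v \<notin> V"
  shows "card (kLeaves k (insert v V) (E \<union> join_edges v D)) = 2
      \<and> (\<exists>x\<in>C. kLeaf k (insert v V) (E \<union> join_edges v D) x) \<longleftrightarrow> w \<in> D"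
proof -
  have V0: "V0 = C" using rooted_kTree_card_k[OF r0(1,4)] by simp
  have T0: "kTree k V0 E0" using rooted_kTreeD[OF r0(1)] by simp
  have T: "kTree k V E" using rooted_kTreeD[OF rooted_kTree.join[OF r0(1-3)]] V by simp
  have fV: "finite V" "card V = Suc k" using kTree_wellformed[OF T0] V r0(3,4) by auto
  have L: "kLeaves k V E = V" using kLeaves_join_card_k[OF T0 r0(2,3,4)] V by simp
  have L': "kLeaves k (insert v V) (E \<union> join_edges v D) = insert v (V - D)"
    using kLeaves_join[OF T D v] fV L by simp
  have "D \<subseteq> V" "finite D" "card D = k" using D unfolding kClique_def by auto
  then have "card (V - D) = 1" using fV by (simp add: card_Diff_subset)
  then obtain y where y: "V - D = {y}" by (rule card_1_singletonE)
  then have L'': "kLeaves k (insert v V) (E \<union> join_edges v D) = {v, y}" using L' by simp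
  have "y \<noteq> v" using y v by auto
  then have "card (kLeaves k (insert v V) (E \<union> join_edges v D)) = 2" using L'' by simp
  moreover have "kLeaf k (insert v V) (E \<union> join_edges v D) x \<longleftrightarrow> x = v \<or> x = y" for x
    using L'' unfolding set_eq_iff by simp
  then have "(\<exists>x\<in>C. kLeaf k (insert v V) (E \<union> join_edges v D) x) \<longleftrightarrow> y \<in> C"
    using v V(1) V0 by auto
  moreover have "y \<in> C \<longleftrightarrow> w \<in> D"
  proof
    assume "y \<in> C"
    then have "w \<noteq> y" using r0(3) V0 by auto
    then show "w \<in> D" using y V(1) by blast
  next
    assume "w \<in> D"
    then have "y \<noteq> w" using y by auto
    then show "y \<in> C" using y V(1) V0 by blast
  qed
  ultimately show ?thesis by simp
qed

lemma card_insert_Diff_eq_2_iff: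
  assumes L: "finite L" "w \<in> L" "L \<inter> D0 = {}" and v: "v \<notin> L" "v \<notin> C" "w \<notin> C"
    and D: "w \<in> D \<Longrightarrow> D \<subseteq> insert w D0"
  shows "card (insert v (L - D)) = 2 \<and> (\<exists>x\<in>C. x \<in> insert v (L - D))
    \<longleftrightarrow> (card L = 2 \<and> (\<exists>x\<in>C. x \<in> L)) \<and> w \<in> D"
proof
  assume h: "card (insert v (L - D)) = 2 \<and> (\<exists>x\<in>C. x \<in> insert v (L - D))"
  then obtain l where l: "l \<in> C" "l \<in> L" "l \<notin> D" using v(2) by auto
  have "{v, l} \<subseteq> insert v (L - D)" using l by auto
  moreover have "v \<noteq> l" using l(1) v(2) by auto
  then have "card (insert v (L - D)) \<le> card {v, l}" using h by simp
  moreover have "finite (insert v (L - D))" using L(1) by simp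
  ultimately have vl: "insert v (L - D) = {v, l}" using card_seteq by metis
  have wD: "w \<in> D"
  proof (rule ccontr)
    assume "w \<notin> D"
    then have "w \<in> {v, l}" using vl L(2) by blast
    then show False using v l L(2) by auto
  qed
  have "L \<subseteq> {w, l}"
  proof
    fix x assume x: "x \<in> L"
    show "x \<in> {w, l}"
    proof (cases "x \<in> D")
      case True
      then show ?thesis using D[OF wD] L(3) x by auto
    next
      case False
      then show ?thesis using vl x v(1) by auto
    qed
  qed
  then have "L = {w, l}" using L(2) l(2) by blast
  moreover have "w \<noteq> l" using l(1) v(3) by auto
  ultimately show "(card L = 2 \<and> (\<exists>x\<in>C. x \<in> L)) \<and> w \<in> D" using l wD by auto
next
  assume h: "(card L = 2 \<and> (\<exists>x\<in>C. x \<in> L)) \<and> w \<in> D"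
  then obtain l where l: "l \<in> C" "l \<in> L" by blast
  then have "l \<noteq> w" using v(3) by auto
  then have "L = {w, l}" using h l L card_seteq[OF L(1), of "{w, l}"] by simp
  moreover have "l \<notin> D" using D h L(3) l \<open>l \<noteq> w\<close> by blast
  ultimately have "insert v (L - D) = {v, l}" using h by auto
  moreover have "v \<noteq> l" using l v(2) by auto
  ultimately show "card (insert v (L - D)) = 2 \<and> (\<exists>x\<in>C. x \<in> insert v (L - D))" using l by auto
qed

lemma kLeaves_two_joins:
  assumes r0: "rooted_kTree k C V0 E0" "kClique k V0 E0 D0" "w \<notin> V0" "Suc k \<le> card V0"
    and V: "V = insert w V0" "E = E0 \<union> join_edges w D0" and D: "kClique k V E D" and v: "v \<notin> V"
  defines "L \<equiv> kLeaves k V E" and "L' \<equiv> kLeaves k (insert v V) (E \<union> join_edges v D)"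
  shows "card L' = 2 \<and> (\<exists>x\<in>C. x \<in> L') \<longleftrightarrow> (card L = 2 \<and> (\<exists>x\<in>C. x \<in> L)) \<and> w \<in> D"
proof -
  have T0: "kTree k V0 E0" "C \<subseteq> V0" using rooted_kTreeD[OF r0(1)] by auto
  have T: "kTree k V E" using rooted_kTreeD[OF rooted_kTree.join[OF r0(1-3)]] V by simp
  have fV: "finite V" "Suc k \<le> card V" using kTree_wellformed[OF T0(1)] V r0(3,4) by auto
  have L: "L = insert w (kLeaves k V0 E0 - D0)" unfolding L_def V using kLeaves_join[OF T0(1) r0(2-4)] .
  have L': "L' = insert v (L - D)" unfolding L_def L'_def using kLeaves_join[OF T D v fV(2)] .
  have DwD0: "D \<subseteq> insert w D0" if "w \<in> D"
    using isClique_join_fresh_subset[OF T0(1) r0(3), of D0 D] r0(2) D that V(2) unfolding kClique_def by auto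
  have fL: "finite L" "v \<notin> L" using fV(1) v unfolding L_def kLeaf_def by auto
  have wL: "w \<in> L" "L \<inter> D0 = {}" using L r0(2,3) unfolding kClique_def by auto
  have "w \<notin> C" "v \<notin> C" using T0(2) r0(3) V(1) v by auto
  then show ?thesis unfolding L' using card_insert_Diff_eq_2_iff[OF fL(1) wL fL(2) _ _ DwD0] by blast
qed

lemma card_subKTree_sets_eq_iff_path:
  assumes "rooted_kTree k C V E" "1 \<le> k" "Suc k \<le> card V"
  shows "card (subKTree_sets k V E C) = card V - k + 1
    \<longleftrightarrow> (card V = k + 1 \<or> card (kLeaves k V E) = 2) \<and> (\<exists>x\<in>C. kLeaf k V E x)"
  using assms
proof (induction rule: rooted_kTree.induct)
  case (join V E D v)
  have T: "kTree k V E" "finite C" "card C = k" using rooted_kTreeD[OF join(1)] by auto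
  have V: "finite V" "k \<le> card V" using kTree_wellformed[OF T(1)] by auto
  have cV: "card (insert v V) = card V + 1" using V join(3) by simp
  show ?case
  proof (cases "card V = k")
    case True
    then have VC: "V = C" "E = completeEdges C" using rooted_kTree_card_k[OF join(1)] by auto
    then have "D = C" using join(2) T card_subset_eq unfolding kClique_def by metis
    then have "{A \<in> subKTree_sets k V E C. D \<subseteq> A} = {C}" using subKTree_sets_root[OF T(2,3)] VC by auto
    then have "card (subKTree_sets k (insert v V) (E \<union> join_edges v D) C) = 2"
      using subKTree_sets_join_counts(1)[OF join(1-3)] subKTree_sets_root[OF T(2,3)] VC by simp
    moreover have "kLeaves k (insert v V) (E \<union> join_edges v D) = insert v V"
      using kLeaves_join_card_k[OF T(1) join(2,3) True] .
    moreover have "C \<noteq> {}" using T join.prems(1) by auto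
    ultimately show ?thesis using True cV VC by auto
  next
    case False
    obtain V0 E0 D0 w where last: "V = insert w V0" "E = E0 \<union> join_edges w D0" "rooted_kTree k C V0 E0"
      "kClique k V0 E0 D0" "w \<notin> V0"
      by (rule rooted_kTree_last_join[OF join(1) False])
    have "kTree k V0 E0" using rooted_kTreeD[OF last(3)] by simp
    then have V0: "finite V0" "k \<le> card V0" "card V = card V0 + 1"
      using kTree_wellformed[of k V0 E0] last(1,5) by auto
    have step: "card (subKTree_sets k (insert v V) (E \<union> join_edges v D) C) = card (insert v V) - k + 1
        \<longleftrightarrow> card (subKTree_sets k V E C) = card V - k + 1 \<and> w \<in> D"
      using card_subKTree_sets_two_joins[OF last(3-5,1,2) join(2,3)] .
    show ?thesis
    proof (cases "card V0 = k")
      case True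
      have "kLeaves k V E = V" using kLeaves_join_card_k[OF _ last(4,5) True] last(1,2) rooted_kTreeD[OF last(3)] by simp
      moreover have "C \<noteq> {}" "C \<subseteq> V" using T join.prems(1) rooted_kTreeD[OF join(1)] by auto
      ultimately have "card (subKTree_sets k V E C) = card V - k + 1"
        using join.IH join.prems V0 True by auto
      then show ?thesis
        using step kLeaves_two_joins_card_k[OF last(3-5) True last(1,2) join(2,3)] cV V0 True by auto
    next
      case False
      then have "card (subKTree_sets k V E C) = card V - k + 1 \<longleftrightarrow> card (kLeaves k V E) = 2 \<and> (\<exists>x\<in>C. kLeaf k V E x)"
        using join.IH join.prems(1) V0 by auto
      then show ?thesis
        using step kLeaves_two_joins[OF last(3-5) _ last(1,2) join(2,3)] cV V0 False by auto
    qed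
  qed
qed simp

lemma boolean_family_iff_cube:
  assumes "\<forall>A\<in>F. C \<subseteq> A \<and> A \<subseteq> V" "V \<in> F"
  shows "boolean_family C F \<longleftrightarrow> F = (\<lambda>X. C \<union> X) ` Pow (V - C)"
proof
  assume "boolean_family C F"
  then obtain U where U: "U \<inter> C = {}" "F = (\<lambda>X. C \<union> X) ` Pow U"
    unfolding boolean_family_def by blast
  have "C \<union> U \<in> F" unfolding U(2) by (intro imageI) simp
  then have "U \<subseteq> V - C" using bspec[OF assms(1)] U(1) by blast
  moreover have "V - C \<subseteq> U" using assms(2) U(2) by auto
  ultimately show "F = (\<lambda>X. C \<union> X) ` Pow (V - C)" using U(2) by simp
qed (auto simp: boolean_family_def)

lemma subKTree_sets_entropy_bound:
  assumes T: "kTree k V E" "kClique k V E C"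
  defines "F \<equiv> subKTree_sets k V E C"
  shows "card F * log 2 (card F) \<le> 2 * excess C F
    \<and> (card F * log 2 (card F) = 2 * excess C F \<longleftrightarrow> kStarBase k V E C)"
proof -
  have r: "rooted_kTree k C V E" using kTree_rooted_at_clique[OF T] .
  have L: "set_lattice C F" unfolding F_def using subKTree_sets_lattice[OF r] .
  have sub: "\<forall>A\<in>F. C \<subseteq> A \<and> A \<subseteq> V" using subKTree_setsD unfolding F_def by blast
  have VF: "V \<in> F" using kTree_in_subKTree_sets[OF T(1)] T(2) unfolding F_def kClique_def by blast
  have "boolean_family C F \<longleftrightarrow> F = (\<lambda>X. C \<union> X) ` Pow (V - C)" by (rule boolean_family_iff_cube[OF sub VF])
  also have "\<dots> \<longleftrightarrow> is_star C V E" unfolding F_def by (rule subKTree_sets_cube_iff_star[OF r])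
  also have "\<dots> \<longleftrightarrow> kStarBase k V E C" using T unfolding kStarBase_def is_star_def by simp
  finally have "boolean_family C F \<longleftrightarrow> kStarBase k V E C" .
  then show ?thesis
    using set_lattice_excess_ge[OF L] excess_boolean_family L unfolding set_lattice_def by blast
qed

lemma subKTree_sets_quadratic_bound:
  assumes k: "1 \<le> k" and T: "kTree k V E" "kClique k V E C"
  defines "F \<equiv> subKTree_sets k V E C"
  shows "2 * excess C F \<le> real (card F) * (real (card F) - 1)
    \<and> (k + 1 \<le> card V \<longrightarrow>
      (2 * excess C F = real (card F) * (real (card F) - 1) \<longleftrightarrow> pathType k V E \<and> simplicial k V E C))"
proof -
  have r: "rooted_kTree k C V E" using kTree_rooted_at_clique[OF T] .
  have "k + 1 \<le> card V \<Longrightarrow> card F = card V - k + 1 \<longleftrightarrow> pathType k V E \<and> simplicial k V E C"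
    using card_subKTree_sets_eq_iff_path[OF r k] T unfolding F_def pathType_def simplicial_def by simp
  then show ?thesis using excess_subKTree_sets_le[OF r] unfolding F_def by simp
qed

lemma mu_eq_excess:
  assumes "kTree k V E" "kClique k V E C"
  defines "F \<equiv> subKTree_sets k V E C"
  shows "mu k V E C = k + excess C F / card F" and "Ncount k V E C = card F" and "0 < card F"
proof -
  have r: "rooted_kTree k C V E" using kTree_rooted_at_clique[OF assms(1,2)] .
  have C: "finite C" "card C = k" using rooted_kTreeD[OF r] by auto
  show N: "Ncount k V E C = card F" unfolding F_def using Ncount_eq_card_subKTree_sets[OF assms(1)] .
  show pos: "0 < card F" using card_subKTree_sets_ge[OF r] unfolding F_def by simp
  have "card A = card (A - C) + k" if "A \<in> F" for A
  proof -
    have "C \<subseteq> A" "A \<subseteq> V" using that subKTree_setsD unfolding F_def by blast+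
    moreover have "finite V" using kTree_wellformed[OF assms(1)] by simp
    ultimately show ?thesis using C card_Diff_subset[of C A] card_mono[of A C] finite_subset by fastforce
  qed
  then have "(\<Sum>A\<in>F. real (card A)) = excess C F + card F * k"
    unfolding excess_def by (simp add: sum.distrib)
  then show "mu k V E C = k + excess C F / card F"
    using pos sum_card_subKTrees[OF assms(1)] unfolding mu_def N F_def by (simp add: field_simps)
qed

lemma mean_bound_iffs:
  fixes N s L c :: real
  assumes "0 < N"
  shows "c + L / 2 \<le> c + s / N \<longleftrightarrow> N * L \<le> 2 * s"
    and "c + L / 2 = c + s / N \<longleftrightarrow> N * L = 2 * s"
    and "c + s / N \<le> (N + 2 * c - 1) / 2 \<longleftrightarrow> 2 * s \<le> N * (N - 1)"
    and "c + s / N = (N + 2 * c - 1) / 2 \<longleftrightarrow> 2 * s = N * (N - 1)"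
  using assms by (auto simp: field_simps)

theorem lemma4p2:
  fixes k :: nat and V :: "'a set" and E :: "'a set set" and C :: "'a set"
  assumes "k \<ge> 1" and "kTree k V E" and "kClique k V E C"
  shows "real k + log 2 (real (Ncount k V E C)) / 2 \<le> mu k V E C
     \<and> mu k V E C \<le> (real (Ncount k V E C) + 2 * real k - 1) / 2
     \<and> (real k + log 2 (real (Ncount k V E C)) / 2 = mu k V E C \<longleftrightarrow> kStarBase k V E C)
     \<and> (card V \<ge> k + 1 \<longrightarrow>
           (mu k V E C = (real (Ncount k V E C) + 2 * real k - 1) / 2 \<longleftrightarrow>
              pathType k V E \<and> simplicial k V E C))"
proof -
  define F where "F = subKTree_sets k V E C"
  define N where "N = real (card F)"
  define s where "s = excess C F"
  have Ncount: "real (Ncount k V E C) = N"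
    using mu_eq_excess(2)[OF assms(2,3)] unfolding F_def N_def by simp
  have "0 < N" using mu_eq_excess(3)[OF assms(2,3)] unfolding F_def N_def by simp
  note iffs = mean_bound_iffs[OF this, of "real k"]
  have mu: "mu k V E C = real k + s / N"
    using mu_eq_excess(1)[OF assms(2,3)] unfolding F_def N_def s_def .
  have lower: "N * log 2 N \<le> 2 * s \<and> (N * log 2 N = 2 * s \<longleftrightarrow> kStarBase k V E C)"
    using subKTree_sets_entropy_bound[OF assms(2,3)] unfolding F_def N_def s_def .
  have upper: "2 * s \<le> N * (N - 1)
      \<and> (k + 1 \<le> card V \<longrightarrow> (2 * s = N * (N - 1) \<longleftrightarrow> pathType k V E \<and> simplicial k V E C))"
    using subKTree_sets_quadratic_bound[OF assms] unfolding F_def N_def s_def .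
  show ?thesis unfolding mu Ncount iffs using lower upper by blast
qed

end
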